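(* Let $(X,\mathcal{O})$ be a sober topological space and $P \subseteq X$ with subspace topology $\mathcal{O}|_P=\{U\cap P\mid U\in\mathcal{O}\}$. Let $j : \mathcal{O} \to \mathcal{O}$ be $j(U) = \bigcup\{V \in \mathcal{O} \mid V \cap P \subseteq U \cap P\}$ and $\widetilde{P} = \{U \in \mathcal{O} \mid j(U)=U\}$. For $x \in X$ let $\widetilde{x} = X \setminus \overline{\{x\}}$. Then the following are equivalent: (i) $(P,\mathcal{O}|_P)$ is sober; (ii) for every $x \in X$, $x \in P$ if and only if $\widetilde{x} \in \widetilde{P}$.
   Context: A point of a frame $L$ is a completely prime filter: an upward-closed subset containing the top, closed under binary meets, and such that if $\bigvee S$ belongs to it then some element of $S$ does. For a space $(X,\mathcal{O})$ and $x\in X$, $\mathcal{F}_x=\{U\in\mathcal{O}\mid x\in U\}$; the space is sober if every point of the frame $\mathcal{O}$ (ordered by inclusion) is $\mathcal{F}_x$ for a unique $x$. *)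

theory Defs
  imports "HOL-Analysis.Analysis"
begin

text \<open>Points of the frame of open sets of a topology: completely prime filters.\<close>
definition frame_point :: "'a topology \<Rightarrow> 'a set set \<Rightarrow> bool" where
  "frame_point T F \<longleftrightarrow>
     F \<subseteq> {U. openin T U} \<and>
     (\<forall>U V. U \<in> F \<and> openin T V \<and> U \<subseteq> V \<longrightarrow> V \<in> F) \<and>
     topspace T \<in> F \<and>
     (\<forall>U V. U \<in> F \<and> V \<in> F \<longrightarrow> U \<inter> V \<in> F) \<and>
     (\<forall>S. S \<subseteq> {U. openin T U} \<and> \<Union>S \<in> F \<longrightarrow> (\<exists>U\<in>S. U \<in> F))"

definition nbhd_filter :: "'a topology \<Rightarrow> 'a \<Rightarrow> 'a set set" where
  "nbhd_filter T x = {U. openin T U \<and> x \<in> U}"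

definition sober :: "'a topology \<Rightarrow> bool" where
  "sober T \<longleftrightarrow> (\<forall>F. frame_point T F \<longrightarrow> (\<exists>!x. x \<in> topspace T \<and> F = nbhd_filter T x))"

definition nucleus_j :: "'a topology \<Rightarrow> 'a set \<Rightarrow> 'a set \<Rightarrow> 'a set" where
  "nucleus_j T P U = \<Union>{V. openin T V \<and> V \<inter> P \<subseteq> U \<inter> P}"

definition Ptilde :: "'a topology \<Rightarrow> 'a set \<Rightarrow> 'a set set" where
  "Ptilde T P = {U. openin T U \<and> nucleus_j T P U = U}"

definition xtilde :: "'a topology \<Rightarrow> 'a \<Rightarrow> 'a set" where
  "xtilde T x = topspace T - T closure_of {x}"

end

theory Submission
  imports Defs
begin

text \<open>
  The inclusion of \<open>P\<close> into \<open>X\<close> sends a point \<open>F\<close> of the frame of \<open>P\<close> to the point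
  \<open>lift_point X P F\<close> of the frame of \<open>X\<close>, and this map is injective. Since \<open>xtilde X x\<close> is
  the largest open set missing \<open>x\<close>, the condition \<open>xtilde X x \<in> Ptilde X P\<close> says precisely
  that the neighbourhood filter of \<open>x\<close> is in the image of this map, namely the image of
  the point \<open>{W. W \<notsubseteq> xtilde X x}\<close> of the frame of \<open>P\<close>. If \<open>P\<close> is sober, such a point
  is the neighbourhood filter of some \<open>p \<in> P\<close>, and \<open>x = p\<close> because \<open>X\<close> is \<open>T\<^sub>0\<close>.
  Conversely, every point of the frame of \<open>P\<close> lifts to the neighbourhood filter of some
  \<open>x \<in> X\<close> by sobriety of \<open>X\<close>; then \<open>xtilde X x \<in> Ptilde X P\<close>, so \<open>x \<in> P\<close> by (ii), and
  injectivity of the lift shows that the point is the neighbourhood filter of \<open>x\<close> in \<open>P\<close>.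
\<close>

lemma frame_pointI:
  assumes "\<And>U. U \<in> F \<Longrightarrow> openin T U"
    and "\<And>U V. U \<in> F \<Longrightarrow> openin T V \<Longrightarrow> U \<subseteq> V \<Longrightarrow> V \<in> F"
    and "topspace T \<in> F"
    and "\<And>U V. U \<in> F \<Longrightarrow> V \<in> F \<Longrightarrow> U \<inter> V \<in> F"
    and "\<And>S. (\<And>U. U \<in> S \<Longrightarrow> openin T U) \<Longrightarrow> \<Union>S \<in> F \<Longrightarrow> \<exists>U\<in>S. U \<in> F"
  shows "frame_point T F"
  unfolding frame_point_def
proof (intro conjI allI impI)
  show "F \<subseteq> {U. openin T U}" using assms(1) by blast
  show "\<exists>U\<in>S. U \<in> F" if "S \<subseteq> {U. openin T U} \<and> \<Union>S \<in> F" for S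
    using that assms(5)[of S] by blast
qed (use assms(2-4) in blast)+

lemma
  assumes "frame_point T F"
  shows frame_point_openin: "U \<in> F \<Longrightarrow> openin T U"
    and frame_point_mono: "U \<in> F \<Longrightarrow> openin T V \<Longrightarrow> U \<subseteq> V \<Longrightarrow> V \<in> F"
    and frame_point_topspace: "topspace T \<in> F"
    and frame_point_Int: "U \<in> F \<Longrightarrow> V \<in> F \<Longrightarrow> U \<inter> V \<in> F"
  using assms unfolding frame_point_def by blast+

lemma frame_point_Union:
  assumes "frame_point T F" "\<And>U. U \<in> S \<Longrightarrow> openin T U" "\<Union>S \<in> F"
  shows "\<exists>U\<in>S. U \<in> F"
proof -
  have "S \<subseteq> {U. openin T U}" using assms(2) by blast
  then show ?thesis using assms(1,3) unfolding frame_point_def by blast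
qed

lemma frame_point_nbhd_filter:
  "x \<in> topspace X \<Longrightarrow> frame_point X (nbhd_filter X x)"
  unfolding frame_point_def nbhd_filter_def by auto

lemma sober_nbhd_filter_inj:
  assumes "sober X" "x \<in> topspace X" "y \<in> topspace X"
    and "nbhd_filter X x = nbhd_filter X y"
  shows "x = y"
  using assms frame_point_nbhd_filter[OF assms(2)] unfolding sober_def by blast

definition lift_point :: "'a topology \<Rightarrow> 'a set \<Rightarrow> 'a set set \<Rightarrow> 'a set set" where
  "lift_point X P F = {U. openin X U \<and> U \<inter> P \<in> F}"

lemma in_lift_point_iff: "U \<in> lift_point X P F \<longleftrightarrow> openin X U \<and> U \<inter> P \<in> F"
  unfolding lift_point_def by simp

lemma frame_point_lift_point:
  assumes F: "frame_point (subtopology X P) F"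
  shows "frame_point X (lift_point X P F)"
proof (rule frame_pointI)
  show "openin X U" if "U \<in> lift_point X P F" for U
    using that by (simp add: in_lift_point_iff)
  show "V \<in> lift_point X P F" if U: "U \<in> lift_point X P F" and V: "openin X V" "U \<subseteq> V" for U V
  proof -
    have "U \<inter> P \<in> F" using U by (simp add: in_lift_point_iff)
    moreover have "U \<inter> P \<subseteq> V \<inter> P" using V(2) by blast
    ultimately have "V \<inter> P \<in> F"
      using frame_point_mono[OF F] openin_subtopology_Int[OF V(1)] by blast
    then show ?thesis using V(1) by (simp add: in_lift_point_iff)
  qed
  show "topspace X \<in> lift_point X P F"
    using frame_point_topspace[OF F] by (simp add: in_lift_point_iff Int_commute)
  show "U \<inter> V \<in> lift_point X P F" if "U \<in> lift_point X P F" "V \<in> lift_point X P F" for U V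
  proof -
    have "(U \<inter> P) \<inter> (V \<inter> P) \<in> F"
      using that frame_point_Int[OF F] by (simp add: in_lift_point_iff)
    moreover have "(U \<inter> P) \<inter> (V \<inter> P) = (U \<inter> V) \<inter> P" by blast
    ultimately show ?thesis
      using that by (simp add: in_lift_point_iff openin_Int)
  qed
  show "\<exists>U\<in>S. U \<in> lift_point X P F"
    if S: "\<And>U. U \<in> S \<Longrightarrow> openin X U" "\<Union>S \<in> lift_point X P F" for S
  proof -
    have "\<Union>S \<inter> P = \<Union>((\<lambda>U. U \<inter> P) ` S)" by blast
    then have "\<Union>((\<lambda>U. U \<inter> P) ` S) \<in> F"
      using S(2) unfolding in_lift_point_iff by simp
    moreover have "openin (subtopology X P) W" if "W \<in> (\<lambda>U. U \<inter> P) ` S" for W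
      using that S(1) openin_subtopology_Int by blast
    ultimately obtain W where "W \<in> (\<lambda>U. U \<inter> P) ` S" "W \<in> F"
      using frame_point_Union[OF F, of "(\<lambda>U. U \<inter> P) ` S"] by blast
    then obtain U where "U \<in> S" "U \<inter> P \<in> F" by blast
    then show ?thesis
      using S(1) in_lift_point_iff by blast
  qed
qed

lemma lift_point_nbhd_filter:
  assumes "x \<in> P"
  shows "lift_point X P (nbhd_filter (subtopology X P) x) = nbhd_filter X x"
proof (rule set_eqI)
  show "U \<in> lift_point X P (nbhd_filter (subtopology X P) x) \<longleftrightarrow> U \<in> nbhd_filter X x" for U
    using assms openin_subtopology_Int[of X U P]
    by (auto simp: in_lift_point_iff nbhd_filter_def)
qed

lemma lift_point_inj:
  assumes F: "frame_point (subtopology X P) F" and G: "frame_point (subtopology X P) G"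
    and lift: "lift_point X P F = lift_point X P G"
  shows "F = G"
proof -
  have "W \<in> F \<longleftrightarrow> W \<in> G" if W_open: "openin (subtopology X P) W" for W
  proof -
    obtain U where U: "openin X U" and W: "W = U \<inter> P"
      using W_open unfolding openin_subtopology by blast
    have "U \<inter> P \<in> F \<longleftrightarrow> U \<in> lift_point X P F"
      using U by (simp add: in_lift_point_iff)
    also have "\<dots> \<longleftrightarrow> U \<inter> P \<in> G"
      using U by (simp add: lift in_lift_point_iff)
    finally show ?thesis
      using W by simp
  qed
  then show ?thesis
    using frame_point_openin[OF F] frame_point_openin[OF G] by auto
qed

lemma in_Ptilde_iff:
  assumes "openin X U"
  shows "U \<in> Ptilde X P \<longleftrightarrow> (\<forall>V. openin X V \<and> V \<inter> P \<subseteq> U \<longrightarrow> V \<subseteq> U)"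
  using assms unfolding Ptilde_def nucleus_j_def by blast

lemma openin_xtilde: "openin X (xtilde X x)"
  unfolding xtilde_def by auto

lemma not_in_xtilde: "x \<notin> xtilde X x"
  unfolding xtilde_def using closure_of_subset[of "{x}" X] by auto

lemma subset_xtilde_iff:
  assumes "openin X U"
  shows "U \<subseteq> xtilde X x \<longleftrightarrow> x \<notin> U"
  using openin_Int_closure_of_eq_empty[OF assms, of "{x}"] openin_subset[OF assms]
  unfolding xtilde_def by blast

lemma xtilde_in_Ptilde_iff_lift_point:
  assumes x: "x \<in> topspace X"
  shows "xtilde X x \<in> Ptilde X P \<longleftrightarrow>
    (\<exists>F. frame_point (subtopology X P) F \<and> lift_point X P F = nbhd_filter X x)"
proof
  assume xt: "xtilde X x \<in> Ptilde X P"
  have trace_subset_iff: "U \<inter> P \<subseteq> xtilde X x \<longleftrightarrow> x \<notin> U" if U: "openin X U" for U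
  proof
    assume "U \<inter> P \<subseteq> xtilde X x"
    then have "U \<subseteq> xtilde X x"
      using xt U unfolding in_Ptilde_iff[OF openin_xtilde] by blast
    then show "x \<notin> U"
      using subset_xtilde_iff[OF U] by blast
  next
    assume "x \<notin> U"
    then show "U \<inter> P \<subseteq> xtilde X x"
      using subset_xtilde_iff[OF U] by blast
  qed
  \<comment> \<open>the point of the frame of \<open>P\<close> given by the prime element \<open>xtilde X x \<inter> P\<close>\<close>
  define F where "F = {W. openin (subtopology X P) W \<and> \<not> W \<subseteq> xtilde X x}"
  have in_F_iff: "U \<inter> P \<in> F \<longleftrightarrow> x \<in> U" if "openin X U" for U
    using that trace_subset_iff openin_subtopology_Int unfolding F_def by blast
  have "frame_point (subtopology X P) F"
  proof (rule frame_pointI)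
    show "topspace (subtopology X P) \<in> F"
      using in_F_iff[OF openin_topspace] x by simp
    show "U \<inter> V \<in> F" if U: "U \<in> F" and V: "V \<in> F" for U V
    proof -
      obtain U' V' where U': "openin X U'" "U = U' \<inter> P" and V': "openin X V'" "V = V' \<inter> P"
        using U V unfolding F_def openin_subtopology by blast
      then have "U \<inter> V = (U' \<inter> V') \<inter> P" by blast
      then show ?thesis
        using U V U' V' in_F_iff openin_Int by (metis IntI)
    qed
  qed (auto simp: F_def)
  moreover have "lift_point X P F = nbhd_filter X x"
    using in_F_iff unfolding nbhd_filter_def by (auto simp: in_lift_point_iff)
  ultimately show "\<exists>F. frame_point (subtopology X P) F \<and> lift_point X P F = nbhd_filter X x"
    by blast
next
  assume "\<exists>F. frame_point (subtopology X P) F \<and> lift_point X P F = nbhd_filter X x"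
  then obtain F where F: "frame_point (subtopology X P) F"
    and lift: "lift_point X P F = nbhd_filter X x"
    by blast
  have not_in_V: "x \<notin> V" if V: "openin X V" and V_trace: "V \<inter> P \<subseteq> xtilde X x" for V
  proof
    assume "x \<in> V"
    then have "V \<in> lift_point X P F"
      using lift V by (simp add: nbhd_filter_def)
    then have "V \<inter> P \<in> F"
      by (simp add: in_lift_point_iff)
    moreover have "V \<inter> P \<subseteq> xtilde X x \<inter> P"
      using V_trace by blast
    ultimately have "xtilde X x \<inter> P \<in> F"
      using frame_point_mono[OF F _ openin_subtopology_Int[OF openin_xtilde]] by blast
    then have "xtilde X x \<in> nbhd_filter X x"
      using openin_xtilde by (simp add: in_lift_point_iff flip: lift)
    then show False
      using not_in_xtilde[of x X] by (simp add: nbhd_filter_def)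
  qed
  show "xtilde X x \<in> Ptilde X P"
    unfolding in_Ptilde_iff[OF openin_xtilde]
  proof (intro allI impI)
    fix V assume "openin X V \<and> V \<inter> P \<subseteq> xtilde X x"
    then show "V \<subseteq> xtilde X x"
      using not_in_V[of V] subset_xtilde_iff[of X V x] by simp
  qed
qed

lemma xtilde_in_Ptilde_if_in:
  assumes "x \<in> topspace X" "x \<in> P"
  shows "xtilde X x \<in> Ptilde X P"
proof -
  have "frame_point (subtopology X P) (nbhd_filter (subtopology X P) x)"
    using frame_point_nbhd_filter[of x "subtopology X P"] assms by simp
  then show ?thesis
    unfolding xtilde_in_Ptilde_iff_lift_point[OF assms(1)]
    using lift_point_nbhd_filter[OF assms(2)] by blast
qed

lemma in_if_xtilde_in_Ptilde:
  assumes "sober X" "sober (subtopology X P)"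
    and x: "x \<in> topspace X" "xtilde X x \<in> Ptilde X P"
  shows "x \<in> P"
proof -
  obtain F where F: "frame_point (subtopology X P) F" "lift_point X P F = nbhd_filter X x"
    using x(2) unfolding xtilde_in_Ptilde_iff_lift_point[OF x(1)] by blast
  have "\<exists>!p. p \<in> topspace (subtopology X P) \<and> F = nbhd_filter (subtopology X P) p"
    using assms(2) F(1) unfolding sober_def by blast
  then obtain p where p: "p \<in> topspace X" "p \<in> P" "F = nbhd_filter (subtopology X P) p"
    by auto
  then have "nbhd_filter X p = nbhd_filter X x"
    using F(2) lift_point_nbhd_filter[OF p(2)] by simp
  then have "p = x"
    using sober_nbhd_filter_inj[OF assms(1) p(1) x(1)] by simp
  with p(2) show ?thesis by simp
qed

lemma sober_subtopologyI:
  assumes "sober X"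
    and in_P: "\<And>x. x \<in> topspace X \<Longrightarrow> xtilde X x \<in> Ptilde X P \<Longrightarrow> x \<in> P"
  shows "sober (subtopology X P)"
  unfolding sober_def
proof (intro allI impI)
  fix F assume F: "frame_point (subtopology X P) F"
  obtain x where x: "x \<in> topspace X" "lift_point X P F = nbhd_filter X x"
    using assms(1) frame_point_lift_point[OF F] unfolding sober_def by blast
  have "x \<in> P"
    using in_P[OF x(1)] F x(2) unfolding xtilde_in_Ptilde_iff_lift_point[OF x(1)] by blast
  then have x_P: "x \<in> topspace (subtopology X P)"
    using x(1) by simp
  have "F = nbhd_filter (subtopology X P) x"
    using lift_point_inj[OF F frame_point_nbhd_filter[OF x_P]] x(2)
      lift_point_nbhd_filter[OF \<open>x \<in> P\<close>] by simp
  moreover have "y = x"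
    if y_P: "y \<in> topspace (subtopology X P)" and F_y: "F = nbhd_filter (subtopology X P) y" for y
  proof -
    have y: "y \<in> topspace X" "y \<in> P"
      using y_P by auto
    then have "nbhd_filter X y = nbhd_filter X x"
      using F_y x(2) lift_point_nbhd_filter[OF y(2)] by simp
    then show ?thesis
      using sober_nbhd_filter_inj[OF assms(1) y(1) x(1)] by simp
  qed
  ultimately show "\<exists>!x. x \<in> topspace (subtopology X P) \<and> F = nbhd_filter (subtopology X P) x"
    using x_P by (intro ex1I[of _ x]) auto
qed

theorem mainTheorem3:
  fixes X :: "'a topology" and P :: "'a set"
  assumes "sober X" and "P \<subseteq> topspace X"
  shows "sober (subtopology X P) \<longleftrightarrow>
         (\<forall>x\<in>topspace X. x \<in> P \<longleftrightarrow> xtilde X x \<in> Ptilde X P)"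
proof
  assume sober_P: "sober (subtopology X P)"
  show "\<forall>x\<in>topspace X. x \<in> P \<longleftrightarrow> xtilde X x \<in> Ptilde X P"
  proof (intro ballI iffI)
    show "xtilde X x \<in> Ptilde X P" if "x \<in> topspace X" "x \<in> P" for x
      using that by (rule xtilde_in_Ptilde_if_in)
    show "x \<in> P" if "x \<in> topspace X" "xtilde X x \<in> Ptilde X P" for x
      using that by (rule in_if_xtilde_in_Ptilde[OF assms(1) sober_P])
  qed
next
  assume "\<forall>x\<in>topspace X. x \<in> P \<longleftrightarrow> xtilde X x \<in> Ptilde X P"
  then show "sober (subtopology X P)"
    using sober_subtopologyI[OF assms(1)] by blast
qed

end
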